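(* Let $a,b\ge0$, $c>0$ with $b<c^2+ac$ and $d:=a^2/4+b>0$, and let $y$ be the solution of the scalar initial value problem $y'=y^2+ay-b$, $y(T)=c$. Then for $t\in(-\infty,T]$, $$y(t)\ge\frac{1}{T-t+\frac{1}{c+a/2}}-\frac{a}{2}.$$ *)

theory Defs
  imports Complex_Main
begin

end

theory Submission
  imports Defs "HOL-Analysis.Analysis"
begin

text \<open>Shifting by \<open>a/2\<close> turns the equation into \<open>z' = z\<^sup>2 - d\<close> with \<open>d \<ge> 0\<close>, so \<open>z' \<le> z\<^sup>2\<close>.
  While \<open>z\<close> is positive, \<open>1/z + t\<close> is then nondecreasing, which integrates to
  \<open>z(t) \<ge> 1/(T - t + 1/z(T))\<close>. The bound is positive, and a continuity argument at the last
  nonpositive point of \<open>z\<close> shows that \<open>z\<close> never leaves the positive region going backwards from \<open>T\<close>.\<close>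

lemma inverse_le_while_positive:
  fixes z z' :: "real \<Rightarrow> real"
  assumes "x \<le> T"
    and cont: "continuous_on {x..T} z"
    and deriv: "\<And>r. x < r \<Longrightarrow> r < T \<Longrightarrow> (z has_real_derivative z' r) (at r)"
    and le_square: "\<And>r. x < r \<Longrightarrow> r < T \<Longrightarrow> z' r \<le> (z r)^2"
    and pos: "\<And>r. x \<le> r \<Longrightarrow> r \<le> T \<Longrightarrow> z r > 0"
  shows "1 / z x \<le> T - x + 1 / z T"
proof -
  define F where "F r = 1 / z r + r" for r
  have "F x \<le> F T"
  proof (rule DERIV_nonneg_imp_increasing_open[OF \<open>x \<le> T\<close>])
    fix r assume r: "x < r" "r < T"
    have zr: "z r > 0" using pos r by simp
    have "(F has_real_derivative 1 - z' r / (z r)^2) (at r)"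
      unfolding F_def using deriv[OF r] zr
      by (auto intro!: derivative_eq_intros simp: power2_eq_square field_simps)
    moreover have "z' r / (z r)^2 \<le> 1"
      using le_square[OF r] zr by simp
    ultimately show "\<exists>y. (F has_real_derivative y) (at r) \<and> 0 \<le> y" by force
  next
    have "\<forall>r\<in>{x..T}. z r \<noteq> 0" using pos by fastforce
    with cont show "continuous_on {x..T} F"
      unfolding F_def by (intro continuous_intros)
  qed
  then show ?thesis by (simp add: F_def)
qed

lemma riccati_lower_bound_while_positive:
  fixes z z' :: "real \<Rightarrow> real"
  assumes "x \<le> T"
    and cont: "continuous_on {x..T} z"
    and deriv: "\<And>r. x < r \<Longrightarrow> r < T \<Longrightarrow> (z has_real_derivative z' r) (at r)"
    and le_square: "\<And>r. x < r \<Longrightarrow> r < T \<Longrightarrow> z' r \<le> (z r)^2"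
    and pos: "\<And>r. x \<le> r \<Longrightarrow> r \<le> T \<Longrightarrow> z r > 0"
  shows "1 / (T - x + 1 / z T) \<le> z x"
proof -
  have zx: "z x > 0" and zT: "z T > 0" using pos \<open>x \<le> T\<close> by auto
  then have "0 < T - x + 1 / z T" using \<open>x \<le> T\<close> by (simp add: add_nonneg_pos)
  with zx have "1 / (T - x + 1 / z T) \<le> 1 / (1 / z x)"
    using inverse_le_while_positive[OF assms] by (intro divide_left_mono) auto
  with zx show ?thesis by simp
qed

lemma riccati_positive_backwards:
  fixes z z' :: "real \<Rightarrow> real"
  assumes cont: "continuous_on {..T} z"
    and deriv: "\<And>r. r < T \<Longrightarrow> (z has_real_derivative z' r) (at r)"
    and le_square: "\<And>r. r < T \<Longrightarrow> z' r \<le> (z r)^2"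
    and zT: "z T > 0"
    and "r \<le> T"
  shows "z r > 0"
proof (rule ccontr)
  assume "\<not> z r > 0"
  define w where "w u = 1 / (T - u + 1 / z T)" for u
  have denom_pos: "0 < T - u + 1 / z T" if "u \<le> T" for u
    using that zT by (simp add: add_nonneg_pos)
  define S where "S = {r..T} \<inter> z -` {..0}"
  have "r \<in> S" using \<open>r \<le> T\<close> \<open>\<not> z r > 0\<close> by (simp add: S_def)
  have "closed S"
    unfolding S_def using continuous_on_subset[OF cont]
    by (intro continuous_closed_preimage) auto
  then have "compact ({r..T} \<inter> S)"
    by (intro compact_Int_closed compact_Icc)
  then have "compact S" by (simp add: S_def Int_assoc)
  then obtain s where "s \<in> S" and s_max: "\<And>x. x \<in> S \<Longrightarrow> x \<le> s"
    using compact_attains_sup[of S] \<open>r \<in> S\<close> by blast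
  then have "r \<le> s" "s \<le> T" "z s \<le> 0" by (auto simp: S_def)
  with zT have "s < T" by (cases "s = T") auto
  \<comment> \<open>right of the last nonpositive point \<open>s\<close> the bound applies and stays above \<open>w s > 0\<close>\<close>
  have above: "w s \<le> z x" if "x \<in> {s<..T}" for x
  proof -
    have "z q > 0" if "x \<le> q" "q \<le> T" for q
    proof -
      have "q \<notin> S" using s_max[of q] that \<open>x \<in> {s<..T}\<close> by auto
      moreover have "q \<in> {r..T}" using that \<open>r \<le> s\<close> \<open>x \<in> {s<..T}\<close> by auto
      ultimately show ?thesis by (simp add: S_def)
    qed
    then have "w x \<le> z x"
      unfolding w_def using that
    proof (intro riccati_lower_bound_while_positive)
      show "continuous_on {x..T} z" using cont by (rule continuous_on_subset) auto
    qed (use deriv le_square in auto)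
    moreover have "w s \<le> w x"
      using that denom_pos[of x] denom_pos[of s] unfolding w_def
      by (intro divide_left_mono) auto
    ultimately show ?thesis by simp
  qed
  have "continuous (at s within {..T}) z"
    using cont \<open>s \<le> T\<close> by (simp add: continuous_on_eq_continuous_within)
  then have "(z \<longlongrightarrow> z s) (at s within {s<..T})"
    unfolding continuous_within by (rule tendsto_within_subset) auto
  moreover have "at s within {s<..T} \<noteq> bot"
    using \<open>s < T\<close> by (simp add: at_within_eq_bot_iff)
  moreover have "\<forall>\<^sub>F x in at s within {s<..T}. w s \<le> z x"
    unfolding eventually_at_filter by (intro always_eventually) (simp add: above)
  ultimately have "w s \<le> z s"
    using tendsto_lowerbound by blast
  moreover have "w s > 0" using denom_pos[OF \<open>s \<le> T\<close>] by (simp add: w_def)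
  ultimately show False using \<open>z s \<le> 0\<close> by simp
qed

lemma has_real_derivative_at_within_atMost:
  assumes "(f has_real_derivative f') (at x within {..T})" and "x < T"
  shows "(f has_real_derivative f') (at x)"
proof -
  have "(f has_real_derivative f') (at x within {..<T})"
    by (rule has_field_derivative_subset[OF assms(1)]) auto
  moreover have "at x within {..<T} = at x"
    using assms(2) by (intro at_within_open) auto
  ultimately show ?thesis by simp
qed

lemma riccati_lower_bound:
  fixes z z' :: "real \<Rightarrow> real"
  assumes deriv: "\<And>r. r \<le> T \<Longrightarrow> (z has_real_derivative z' r) (at r within {..T})"
    and le_square: "\<And>r. r \<le> T \<Longrightarrow> z' r \<le> (z r)^2"
    and zT: "z T > 0"
    and "t \<le> T"
  shows "1 / (T - t + 1 / z T) \<le> z t"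
proof -
  have cont: "continuous_on {..T} z"
    by (rule DERIV_continuous_on[OF deriv]) auto
  have deriv_at: "(z has_real_derivative z' r) (at r)" if "r < T" for r
    using has_real_derivative_at_within_atMost[OF deriv] that by simp
  have pos: "z r > 0" if "r \<le> T" for r
    using riccati_positive_backwards[OF cont deriv_at _ zT that] le_square by simp
  show ?thesis
  proof (rule riccati_lower_bound_while_positive[OF \<open>t \<le> T\<close>])
    show "continuous_on {t..T} z" using cont by (rule continuous_on_subset) auto
  qed (use deriv_at le_square pos in auto)
qed

theorem corollaryA2:
  fixes a b c T :: real and y :: "real \<Rightarrow> real"
  assumes "a \<ge> 0" and "b \<ge> 0" and "c > 0"
    and "b < c^2 + a * c"
    and "a^2 / 4 + b > 0"
    and "\<And>t. t \<le> T \<Longrightarrow>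
           (y has_real_derivative ((y t)^2 + a * y t - b)) (at t within {..T})"
    and "y T = c"
  shows "\<forall>t \<le> T. y t \<ge> 1 / (T - t + 1 / (c + a / 2)) - a / 2"
proof (intro allI impI)
  fix t assume "t \<le> T"
  define z where "z r = y r + a / 2" for r
  have deriv: "(z has_real_derivative (z r)^2 - (a^2 / 4 + b)) (at r within {..T})"
    if "r \<le> T" for r
    using assms(6)[OF that] unfolding z_def
    by (auto intro!: derivative_eq_intros simp: power2_eq_square algebra_simps)
  have le_square: "(z r)^2 - (a^2 / 4 + b) \<le> (z r)^2" for r
    using assms(2) zero_le_power2[of a] by linarith
  have zT: "z T = c + a / 2" using assms(7) by (simp add: z_def)
  have "1 / (T - t + 1 / z T) \<le> z t"
    using assms(1,3) zT \<open>t \<le> T\<close> by (intro riccati_lower_bound[OF deriv le_square]) auto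
  then show "y t \<ge> 1 / (T - t + 1 / (c + a / 2)) - a / 2"
    using assms(7) by (simp add: z_def)
qed

end
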